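(* Let $n>2$ be an integer and let $A$ be a set of $k$ integers with $k\ge 2n+1$. Then $$|S_n(A)|> (k-1)n-3\binom n2+1.$$
   Context: For a finite set $A\subseteq\mathbb Z$ and a positive integer $n$, define $$S_n(A)=\{a_1+\cdots+a_n:\ a_1,\ldots,a_n\in A,\ \text{and}\ a_i^2\neq a_j^2\ \text{for}\ 1\le i<j\le n\}.$$ *)

theory Defs
  imports Main
begin

definition restricted_sumset :: "nat \<Rightarrow> int set \<Rightarrow> int set" where
  "restricted_sumset n A =
     {(\<Sum>i<n. a i) | a. (\<forall>i<n. a i \<in> A) \<and>
                        (\<forall>i<n. \<forall>j<n. i < j \<longrightarrow> (a i)^2 \<noteq> (a j)^2)}"

end

theory Submission
  imports Defs
begin

(* Let a(A) be the number of absolute values occurring in A. As card A <= 2 a(A), it suffices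
   to prove the bound whenever a(A) > n, by induction on n >= 3 and, inside, on card A.
   Replacing A by -A if necessary, the largest absolute value x of A lies in A; let A' = A - {x}.
   If still a(A') > n, pick summands with maximal sum in S_n(A'): they avoid -x, and trading each
   of the n summands for x gives n sums above all of S_n(A'), which pays for the step in card A.
   Otherwise a(A') = n and all of A' lies strictly between -x and x. Then x + S_(n-1)(A') is a
   part of S_n(A) lying above the least element of S_n(A'), and above the two least ones if A' is
   symmetric; since card A' <= 2n this pays for the step from (n - 1, card A') to (n, card A).
   For n = 3 this last case is settled instead by exhibiting enough explicit sums. *)

definition abs_inj_subsets :: "nat \<Rightarrow> int set \<Rightarrow> int set set" where
  "abs_inj_subsets n A = {C. C \<subseteq> A \<and> finite C \<and> card C = n \<and> inj_on abs C}"

lemma power2_eq_iff_abs_eq: "(a::int)\<^sup>2 = b\<^sup>2 \<longleftrightarrow> \<bar>a\<bar> = \<bar>b\<bar>"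
  by (simp add: power2_eq_iff abs_eq_iff)

lemma restricted_sumset_eq_Sum_image:
  "restricted_sumset n A = Sum ` abs_inj_subsets n A"
proof
  show "restricted_sumset n A \<subseteq> Sum ` abs_inj_subsets n A"
  proof
    fix s assume "s \<in> restricted_sumset n A"
    then obtain a where s: "s = (\<Sum>i<n. a i)" and aA: "\<forall>i<n. a i \<in> A"
      and sq: "\<forall>i<n. \<forall>j<n. i < j \<longrightarrow> (a i)\<^sup>2 \<noteq> (a j)\<^sup>2"
      unfolding restricted_sumset_def by blast
    have abs_eq: "i = j" if "\<bar>a i\<bar> = \<bar>a j\<bar>" "i < n" "j < n" for i j
      using sq that by (metis power2_eq_iff_abs_eq linorder_neqE_nat)
    then have inj: "inj_on a {..<n}"
      by (auto intro: inj_onI)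
    have "a ` {..<n} \<in> abs_inj_subsets n A"
      using aA abs_eq unfolding abs_inj_subsets_def
      by (auto simp: card_image[OF inj] inj_on_def)
    moreover have "s = \<Sum>(a ` {..<n})"
      using s by (simp add: sum.reindex[OF inj])
    ultimately show "s \<in> Sum ` abs_inj_subsets n A" by blast
  qed
next
  show "Sum ` abs_inj_subsets n A \<subseteq> restricted_sumset n A"
  proof
    fix s assume "s \<in> Sum ` abs_inj_subsets n A"
    then obtain C where C: "C \<subseteq> A" "finite C" "card C = n" "inj_on abs C" and s: "s = \<Sum>C"
      unfolding abs_inj_subsets_def by auto
    obtain f where f: "bij_betw f {..<n} C"
      using C by (metis ex_bij_betw_nat_finite lessThan_atLeast0)
    have "s = (\<Sum>i<n. f i)"
      using s sum.reindex_bij_betw[OF f, of "\<lambda>x. x"] by simp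
    moreover have "\<forall>i<n. f i \<in> A"
      using f C by (auto dest: bij_betw_apply)
    moreover have "(f i)\<^sup>2 \<noteq> (f j)\<^sup>2" if "i < n" "j < n" "i < j" for i j
    proof -
      have "f i \<noteq> f j"
        using that f by (metis bij_betw_iff_bijections less_irrefl lessThan_iff)
      with that show ?thesis
        using C(4) bij_betw_apply[OF f] by (auto simp: power2_eq_iff_abs_eq dest: inj_onD)
    qed
    ultimately show "s \<in> restricted_sumset n A"
      unfolding restricted_sumset_def by blast
  qed
qed

lemma restricted_sumsetI: "C \<in> abs_inj_subsets n A \<Longrightarrow> \<Sum>C \<in> restricted_sumset n A"
  by (simp add: restricted_sumset_eq_Sum_image)

lemma restricted_sumsetE:
  assumes "s \<in> restricted_sumset n A"
  obtains C where "C \<in> abs_inj_subsets n A" "s = \<Sum>C"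
  using assms by (auto simp: restricted_sumset_eq_Sum_image)

lemma finite_restricted_sumset: "finite A \<Longrightarrow> finite (restricted_sumset n A)"
  unfolding restricted_sumset_eq_Sum_image abs_inj_subsets_def
  by (auto intro: finite_subset[of _ "Pow A"])

lemma restricted_sumset_mono: "A \<subseteq> B \<Longrightarrow> restricted_sumset n A \<subseteq> restricted_sumset n B"
  unfolding restricted_sumset_eq_Sum_image abs_inj_subsets_def by blast

lemma uminus_restricted_sumset_subset:
  "uminus ` restricted_sumset n A \<subseteq> restricted_sumset n (uminus ` A)"
proof
  fix s assume "s \<in> uminus ` restricted_sumset n A"
  then obtain a where "s = - (\<Sum>i<n. a i)" "\<forall>i<n. a i \<in> A"
    "\<forall>i<n. \<forall>j<n. i < j \<longrightarrow> (a i)\<^sup>2 \<noteq> (a j)\<^sup>2"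
    unfolding restricted_sumset_def by blast
  then show "s \<in> restricted_sumset n (uminus ` A)"
    unfolding restricted_sumset_def
    by (intro CollectI exI[of _ "\<lambda>i. - a i"]) (auto simp: sum_negf)
qed

lemma restricted_sumset_uminus:
  "restricted_sumset n (uminus ` A) = uminus ` restricted_sumset n A"
proof
  have "uminus ` restricted_sumset n (uminus ` A) \<subseteq> restricted_sumset n A"
    using uminus_restricted_sumset_subset[of n "uminus ` A"] by (simp add: image_image)
  then show "restricted_sumset n (uminus ` A) \<subseteq> uminus ` restricted_sumset n A"
    by (auto simp: image_image image_subset_iff intro: image_eqI[where x="- _"])
qed (rule uminus_restricted_sumset_subset)

lemma card_restricted_sumset_uminus:
  "card (restricted_sumset n (uminus ` A)) = card (restricted_sumset n A)"
  by (simp add: restricted_sumset_uminus card_image)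

lemma abs_inj_subsetsD:
  assumes "C \<in> abs_inj_subsets n A"
  shows "C \<subseteq> A" "finite C" "card C = n" "inj_on abs C"
  using assms unfolding abs_inj_subsets_def by auto

lemma card_abs_image_abs_inj_subset: "C \<in> abs_inj_subsets n A \<Longrightarrow> card (abs ` C) = n"
  using abs_inj_subsetsD[of C n A] by (simp add: card_image)

lemma abs_inj_subsets_mono: "A \<subseteq> B \<Longrightarrow> abs_inj_subsets n A \<subseteq> abs_inj_subsets n B"
  unfolding abs_inj_subsets_def by blast

lemma ex_abs_notin_abs_image:
  assumes "R \<in> abs_inj_subsets m A" "m < card (abs ` A)"
  obtains z where "z \<in> A" "\<bar>z\<bar> \<notin> abs ` R"
proof -
  have "abs ` R \<noteq> abs ` A"
    using assms card_abs_image_abs_inj_subset by fastforce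
  moreover have "abs ` R \<subseteq> abs ` A"
    using abs_inj_subsetsD(1)[OF assms(1)] by blast
  ultimately show ?thesis
    using that by blast
qed

lemma ex_abs_inj_subset:
  assumes "finite A" "n \<le> card (abs ` A)"
  obtains C where "C \<in> abs_inj_subsets n A"
proof -
  obtain B where B: "B \<subseteq> abs ` A" "card B = n"
    using obtain_subset_with_card_n[OF assms(2)] by blast
  let ?C = "inv_into A abs ` B"
  have "inj_on abs ?C"
    using B(1) by (auto simp: inj_on_def) (metis f_inv_into_f subsetD)
  moreover have "card ?C = n"
    using B by (simp add: card_image inj_on_inv_into)
  moreover have "?C \<subseteq> A"
    using B(1) by (auto intro: inv_into_into)
  moreover from this have "finite ?C"
    using assms(1) finite_subset by blast
  ultimately show ?thesis
    using that unfolding abs_inj_subsets_def by blast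
qed

lemma restricted_sumset_insert:
  assumes "R \<in> abs_inj_subsets m A" "z \<in> A" "\<bar>z\<bar> \<notin> abs ` R"
  shows "z + \<Sum>R \<in> restricted_sumset (Suc m) A"
proof -
  note R = abs_inj_subsetsD[OF assms(1)]
  have "z \<notin> R"
    using assms(3) by auto
  then have "insert z R \<in> abs_inj_subsets (Suc m) A"
    using R assms(2,3) unfolding abs_inj_subsets_def by auto
  with \<open>z \<notin> R\<close> show ?thesis
    using restricted_sumsetI R(2) by fastforce
qed

lemma restricted_sumset_exchange:
  assumes "C \<in> abs_inj_subsets n A" "c \<in> C" "z \<in> A" "\<bar>z\<bar> \<notin> abs ` (C - {c})"
  shows "\<Sum>C - c + z \<in> restricted_sumset n A"
proof -
  note C = abs_inj_subsetsD[OF assms(1)]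
  obtain m where m: "n = Suc m"
    using C(2,3) assms(2) by (cases n) auto
  have "C - {c} \<in> abs_inj_subsets m A"
    using C assms(2) m unfolding abs_inj_subsets_def by (auto intro: inj_on_subset)
  from restricted_sumset_insert[OF this assms(3,4)] show ?thesis
    using C(2) assms(2) m by (simp add: sum_diff1 algebra_simps)
qed

lemma card_add_card_le_of_less:
  fixes S T :: "'a::linorder set"
  assumes "S \<subseteq> U" "T \<subseteq> U" "finite U" "\<forall>s\<in>S. \<forall>t\<in>T. s < t"
  shows "card S + card T \<le> card U"
proof -
  have "S \<inter> T = {}"
    using assms(4) by fastforce
  with assms(1-3) have "card (S \<union> T) = card S + card T"
    by (meson card_Un_disjoint finite_subset)
  with assms(1-3) show ?thesis
    by (metis Un_least card_mono)
qed

definition paired_values :: "int set \<Rightarrow> int set" where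
  "paired_values A = {v \<in> A. 0 < v \<and> - v \<in> A}"

lemma paired_values_subset_abs_image: "paired_values A \<subseteq> abs ` A"
  unfolding paired_values_def by (auto intro!: image_eqI)

lemma card_eq_card_abs_image_add_card_paired_values:
  assumes "finite A"
  shows "card A = card (abs ` A) + card (paired_values A)"
proof -
  define N where "N = {a \<in> A. a < 0 \<and> - a \<in> A}"
  have "N = uminus ` paired_values A"
    unfolding N_def paired_values_def by force
  then have card_N: "card N = card (paired_values A)"
    by (simp add: card_image)
  have "inj_on abs (A - N)"
    unfolding N_def by (rule inj_onI) (auto simp: abs_if split: if_splits)
  moreover have "abs ` (A - N) = abs ` A"
    unfolding N_def by (force simp: abs_if intro: image_eqI[where x="- _"])
  ultimately have "card (A - N) = card (abs ` A)"
    by (metis card_image)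
  moreover have "card A = card (A - N) + card N"
  proof -
    have "N \<subseteq> A"
      unfolding N_def by blast
    then show ?thesis
      using assms card_Diff_subset[of N A] card_mono[of A N] finite_subset by fastforce
  qed
  ultimately show ?thesis
    using card_N by simp
qed

lemma card_le_double_card_abs_image: "finite A \<Longrightarrow> card A \<le> 2 * card (abs ` (A::int set))"
  using card_eq_card_abs_image_add_card_paired_values[of A]
    card_mono[OF _ paired_values_subset_abs_image, of A] by simp

lemma paired_values_eq_abs_image:
  assumes "finite A" "card A = 2 * card (abs ` A)"
  shows "paired_values A = abs ` A"
  using assms card_eq_card_abs_image_add_card_paired_values[of A]
  by (intro card_subset_eq paired_values_subset_abs_image) simp_all

lemma card_restricted_sumset_insert_max:
  assumes "finite A" "0 < x" "x \<notin> A" "\<forall>a\<in>A. a \<noteq> - x \<longrightarrow> \<bar>a\<bar> < x"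
    and "n \<le> card (abs ` A)" "- x \<in> A \<Longrightarrow> n < card (abs ` A)"
  shows "card (restricted_sumset n A) + n \<le> card (restricted_sumset n (insert x A))"
proof -
  let ?S = "restricted_sumset n A"
  have "finite ?S"
    using assms(1) by (rule finite_restricted_sumset)
  moreover obtain C where "C \<in> abs_inj_subsets n A"
    using ex_abs_inj_subset[OF assms(1,5)] .
  then have "?S \<noteq> {}"
    using restricted_sumsetI by blast
  ultimately obtain T where T: "T \<in> abs_inj_subsets n A" and T_max: "\<forall>s\<in>?S. s \<le> \<Sum>T"
    by (metis Max_ge Max_in restricted_sumsetE)
  note T' = abs_inj_subsetsD[OF T]
  txt \<open>If \<open>- x \<in> T\<close>, trading it for an absolute value missing from \<open>T\<close> would increase
    the maximal sum.\<close>
  have "- x \<notin> T"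
  proof
    assume "- x \<in> T"
    then obtain z where z: "z \<in> A" "\<bar>z\<bar> \<notin> abs ` T"
      using ex_abs_notin_abs_image[OF T] assms(6) T'(1) by blast
    then have "- x < z"
      using assms(2,4) \<open>- x \<in> T\<close> by (cases "z = - x") force+
    moreover have "\<Sum>T - (- x) + z \<in> ?S"
      using restricted_sumset_exchange[OF T \<open>- x \<in> T\<close> z(1)] z(2) by blast
    ultimately show False
      using T_max by fastforce
  qed
  then have T_below: "\<bar>t\<bar> < x" if "t \<in> T" for t
    using assms(4) T'(1) that by force
  let ?N = "(\<lambda>t. \<Sum>T - t + x) ` T"
  have "?N \<subseteq> restricted_sumset n (insert x A)"
  proof
    fix s assume "s \<in> ?N"
    then obtain t where "t \<in> T" "s = \<Sum>T - t + x"
      by blast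
    moreover have "T \<in> abs_inj_subsets n (insert x A)"
      using T abs_inj_subsets_mono by blast
    moreover have "\<bar>x\<bar> \<notin> abs ` (T - {t})"
      using T_below assms(2) by fastforce
    ultimately show "s \<in> restricted_sumset n (insert x A)"
      using restricted_sumset_exchange by blast
  qed
  moreover have "card ?N = n"
    using T' by (simp add: card_image inj_on_def)
  moreover have "\<forall>s\<in>?S. \<forall>t\<in>?N. s < t"
    using T_max T_below by fastforce
  moreover have "?S \<subseteq> restricted_sumset n (insert x A)"
    by (simp add: restricted_sumset_mono subset_insertI)
  ultimately show ?thesis
    using card_add_card_le_of_less finite_restricted_sumset assms(1) by (metis finite_insert)
qed

lemma card_restricted_sumset_ge_two:
  assumes "finite A" "card (abs ` A) = n" "n < card A"
  shows "2 \<le> card (restricted_sumset n A)"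
proof -
  obtain v where v: "v \<in> paired_values A"
    using card_eq_card_abs_image_add_card_paired_values[OF assms(1)] assms(2,3)
    by (metis add.right_neutral all_not_in_conv card.empty less_not_refl)
  obtain T where T: "T \<in> abs_inj_subsets n A"
    using ex_abs_inj_subset[OF assms(1)] assms(2) by blast
  note T' = abs_inj_subsetsD[OF T]
  have "abs ` T = abs ` A"
    using card_abs_image_abs_inj_subset[OF T] assms(1,2) T'(1)
    by (metis card_subset_eq finite_imageI image_mono)
  then obtain t where t: "t \<in> T" "\<bar>t\<bar> = v"
    using v paired_values_subset_abs_image by (metis imageE subsetD)
  then have "- t \<in> A" "t \<noteq> 0"
    using v unfolding paired_values_def by (auto simp: abs_if split: if_splits)
  moreover have "\<bar>- t\<bar> \<notin> abs ` (T - {t})"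
    using T'(4) t(1) by (auto dest: inj_onD)
  ultimately have "\<Sum>T - t + - t \<in> restricted_sumset n A"
    using restricted_sumset_exchange[OF T t(1)] by blast
  moreover have "\<Sum>T \<in> restricted_sumset n A"
    using T by (rule restricted_sumsetI)
  moreover have "\<Sum>T - t + - t \<noteq> \<Sum>T"
    using \<open>t \<noteq> 0\<close> by simp
  ultimately show ?thesis
    using finite_restricted_sumset[OF assms(1)]
    by (metis card_2_iff card_mono empty_subsetI insert_subset)
qed

lemma card_restricted_sumset_insert_above:
  assumes "finite A" "\<forall>a\<in>A. \<bar>a\<bar> < x" "L \<subseteq> restricted_sumset (Suc m) A"
    and "\<forall>l\<in>L. \<forall>s\<in>restricted_sumset m A. l < x + s"
  shows "card L + card (restricted_sumset m A) \<le> card (restricted_sumset (Suc m) (insert x A))"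
proof -
  let ?Y = "(+) x ` restricted_sumset m A"
  have "?Y \<subseteq> restricted_sumset (Suc m) (insert x A)"
  proof
    fix y assume "y \<in> ?Y"
    then obtain R where R: "R \<in> abs_inj_subsets m A" "y = x + \<Sum>R"
      by (auto elim: restricted_sumsetE)
    moreover have "\<bar>x\<bar> \<notin> abs ` R"
      using assms(2) abs_inj_subsetsD(1)[OF R(1)] by fastforce
    ultimately show "y \<in> restricted_sumset (Suc m) (insert x A)"
      using restricted_sumset_insert abs_inj_subsets_mono[of A "insert x A"] by blast
  qed
  moreover have "L \<subseteq> restricted_sumset (Suc m) (insert x A)"
    using assms(3) restricted_sumset_mono[of A "insert x A"] by blast
  moreover have "card ?Y = card (restricted_sumset m A)"
    by (simp add: card_image)
  ultimately show ?thesis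
    using card_add_card_le_of_less[of L _ ?Y] assms(1,4) finite_restricted_sumset
    by (metis finite_insert imageE)
qed

lemma card_restricted_sumset_insert_above_Suc:
  assumes "finite A" "card (abs ` A) = Suc m" "\<forall>a\<in>A. \<bar>a\<bar> < x"
  shows "card (restricted_sumset m A) + 1 \<le> card (restricted_sumset (Suc m) (insert x A))"
proof -
  let ?S = "restricted_sumset (Suc m) A"
  have "finite ?S"
    using assms(1) by (rule finite_restricted_sumset)
  moreover obtain C where "C \<in> abs_inj_subsets (Suc m) A"
    using ex_abs_inj_subset[OF assms(1)] assms(2) by auto
  then have "?S \<noteq> {}"
    using restricted_sumsetI by blast
  moreover have "Min ?S < x + s" if "s \<in> restricted_sumset m A" for s
  proof -
    obtain R where R: "R \<in> abs_inj_subsets m A" "s = \<Sum>R"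
      using \<open>s \<in> restricted_sumset m A\<close> by (rule restricted_sumsetE)
    obtain z where z: "z \<in> A" "\<bar>z\<bar> \<notin> abs ` R"
      using ex_abs_notin_abs_image[OF R(1)] assms(2) by auto
    have "Min ?S \<le> z + \<Sum>R"
      using restricted_sumset_insert[OF R(1) z] \<open>finite ?S\<close> by simp
    also have "\<dots> < x + s"
      using z(1) assms(3) R(2) by fastforce
    finally show ?thesis .
  qed
  ultimately show ?thesis
    using card_restricted_sumset_insert_above[OF assms(1,3), of "{Min ?S}" m] by simp
qed

lemma card_restricted_sumset_insert_above_symmetric:
  assumes "finite A" "card (abs ` A) = Suc m" "\<forall>a\<in>A. \<bar>a\<bar> < x" "card A = 2 * Suc m"
  shows "card (restricted_sumset m A) + 2 \<le> card (restricted_sumset (Suc m) (insert x A))"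
proof -
  define B where "B = abs ` A"
  have B: "0 < v" "v \<in> A" "- v \<in> A" if "v \<in> B" for v
    using paired_values_eq_abs_image[OF assms(1)] assms(2,4) that
    unfolding B_def paired_values_def by auto
  have "finite B" "B \<noteq> {}"
    using assms(1,2) unfolding B_def by auto
  txt \<open>The two smallest sums: all negative values, and the same with \<open>- u\<close> traded for
    \<open>u\<close>, where \<open>u\<close> is the least absolute value.\<close>
  define u where "u = Min B"
  have u: "u \<in> B" "\<And>v. v \<in> B \<Longrightarrow> u \<le> v"
    using \<open>finite B\<close> \<open>B \<noteq> {}\<close> unfolding u_def by auto
  define C where "C = uminus ` B"
  have "inj_on abs C"
    unfolding C_def inj_on_def by (metis B(1) abs_minus_cancel abs_of_pos imageE)
  then have C: "C \<in> abs_inj_subsets (Suc m) A"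
    using B \<open>finite B\<close> assms(2) unfolding abs_inj_subsets_def C_def B_def
    by (auto simp: card_image)
  have sum_C: "\<Sum>C = - \<Sum>B"
    unfolding C_def by (simp add: sum.reindex sum_negf)
  have "- u \<in> C"
    using u(1) unfolding C_def by blast
  moreover have "\<bar>u\<bar> \<notin> abs ` (C - {- u})"
    using \<open>inj_on abs C\<close> \<open>- u \<in> C\<close> by (auto dest: inj_onD[where x="- u"])
  ultimately have "- \<Sum>B + 2 * u \<in> restricted_sumset (Suc m) A"
    using restricted_sumset_exchange[OF C _ B(2)[OF u(1)]] sum_C by fastforce
  moreover have "- \<Sum>B \<in> restricted_sumset (Suc m) A"
    using restricted_sumsetI[OF C] sum_C by simp
  moreover have "\<forall>l\<in>{- \<Sum>B, - \<Sum>B + 2 * u}. l < x + s" if "s \<in> restricted_sumset m A" for s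
  proof -
    obtain R where R: "R \<in> abs_inj_subsets m A" "s = \<Sum>R"
      using \<open>s \<in> restricted_sumset m A\<close> by (rule restricted_sumsetE)
    note R' = abs_inj_subsetsD[OF R(1)]
    obtain z where z: "z \<in> A" "\<bar>z\<bar> \<notin> abs ` R"
      using ex_abs_notin_abs_image[OF R(1)] assms(2) by auto
    have "- \<Sum>(abs ` R) = (\<Sum>r\<in>R. - \<bar>r\<bar>)"
      using R'(4) by (simp add: sum.reindex sum_negf)
    also have "\<dots> \<le> s"
      unfolding R(2) by (rule sum_mono) simp
    finally have "- \<Sum>(abs ` R) \<le> s" .
    moreover have "\<Sum>(abs ` R) \<le> \<Sum>(B - {\<bar>z\<bar>})"
    proof (rule sum_mono2)
      show "abs ` R \<subseteq> B - {\<bar>z\<bar>}"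
        using R'(1) z(2) unfolding B_def by blast
    qed (use \<open>finite B\<close> B(1) in \<open>auto intro: less_imp_le\<close>)
    moreover have "\<Sum>(B - {\<bar>z\<bar>}) = \<Sum>B - \<bar>z\<bar>"
      using \<open>finite B\<close> z(1) by (simp add: sum_diff1 B_def)
    moreover have "0 < u" "u \<le> \<bar>z\<bar>" "u < x"
      using B(1) u z(1) assms(3) unfolding B_def by auto
    ultimately show ?thesis
      by auto
  qed
  moreover have "card {- \<Sum>B, - \<Sum>B + 2 * u} = 2"
    using B(1)[OF u(1)] by simp
  ultimately show ?thesis
    using card_restricted_sumset_insert_above[OF assms(1,3), of "{- \<Sum>B, - \<Sum>B + 2 * u}" m]
    by (simp add: add.commute)
qed

lemma card_2_sorted:
  fixes S :: "'a::linorder set"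
  assumes "card S = 2"
  obtains a b where "a < b" "S = {a, b}"
proof -
  have "finite S"
    using assms by (metis card.infinite zero_neq_numeral)
  define L where "L = sorted_list_of_set S"
  have "length L = 2" "sorted_wrt (<) L" "set L = S"
    unfolding L_def using assms \<open>finite S\<close> by simp_all
  then show ?thesis
    using that by (auto simp: numeral_2_eq_2 length_Suc_conv)
qed

lemma card_3_sorted:
  fixes S :: "'a::linorder set"
  assumes "card S = 3"
  obtains a b c where "a < b" "b < c" "S = {a, b, c}"
proof -
  have "finite S"
    using assms by (metis card.infinite zero_neq_numeral)
  define L where "L = sorted_list_of_set S"
  have "length L = 3" "sorted_wrt (<) L" "set L = S"
    unfolding L_def using assms \<open>finite S\<close> by simp_all
  then show ?thesis
    using that by (auto simp: numeral_3_eq_3 length_Suc_conv)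
qed

definition sumset_bound :: "nat \<Rightarrow> nat \<Rightarrow> int" where
  "sumset_bound n k = (int k - 1) * int n - 3 * int (n choose 2) + 1"

lemma sumset_bound_Suc: "sumset_bound n (Suc k) = sumset_bound n k + int n"
  by (simp add: sumset_bound_def algebra_simps)

lemma sumset_bound_Suc_Suc: "sumset_bound (Suc m) (Suc k) = sumset_bound m k + int k - 2 * int m"
  by (simp add: sumset_bound_def numeral_2_eq_2 algebra_simps)

lemma sumset_bound_3_Suc: "sumset_bound 3 (Suc k) = 3 * int k - 8"
  by (simp add: sumset_bound_def choose_two)

lemma restricted_sumset_3I:
  assumes "p \<in> A" "q \<in> A" "r \<in> A" "\<bar>p\<bar> \<noteq> \<bar>q\<bar>" "\<bar>p\<bar> \<noteq> \<bar>r\<bar>" "\<bar>q\<bar> \<noteq> \<bar>r\<bar>"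
  shows "p + q + r \<in> restricted_sumset 3 A"
proof -
  have "p \<noteq> q" "p \<noteq> r" "q \<noteq> r"
    using assms(4-6) by auto
  then have "{p, q, r} \<in> abs_inj_subsets 3 A" "\<Sum>{p, q, r} = p + q + r"
    using assms unfolding abs_inj_subsets_def by (simp_all add: inj_on_insert)
  then show ?thesis
    by (metis restricted_sumsetI)
qed

lemma Suc_length_le_card:
  assumes "set xs \<subseteq> S" "finite S" "distinct xs" "E \<subseteq> S" "\<not> E \<subseteq> set xs"
  shows "Suc (length xs) \<le> card S"
proof -
  obtain e where "e \<in> S" "e \<notin> set xs"
    using assms(4,5) by blast
  then have "insert e (set xs) \<subseteq> S" "card (insert e (set xs)) = Suc (length xs)"
    using assms(1,3) by (simp_all add: distinct_card)
  then show ?thesis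
    using card_mono[OF assms(2)] by metis
qed

text \<open>Which of the additional sums avoids the list \<open>xs\<close> depends on how the values compare,
  so only the failure of the inclusion is proved.\<close>

lemma card_restricted_sumset_3_two_pairs:
  fixes a b s x :: int
  assumes "0 < a" "a < b" "b < x" "\<bar>s\<bar> < x" "\<bar>s\<bar> \<noteq> a" "\<bar>s\<bar> \<noteq> b"
  shows "8 \<le> card (restricted_sumset 3 {x, a, - a, b, - b, s})"
proof -
  let ?A = "{x, a, - a, b, - b, s}"
  have s: "s \<noteq> a" "s \<noteq> - a" "s \<noteq> b" "s \<noteq> - b" "s < x" "- x < s"
    using assms by auto
  define xs where "xs = [s - a - b, s + a - b, s - a + b, s + a + b, x + a + b, x + s + b, x + s + a]"
  have "set xs \<subseteq> restricted_sumset 3 ?A"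
    unfolding xs_def using assms s
    by (simp only: set_simps insert_subset empty_subsetI diff_conv_add_uminus)
      (intro conjI restricted_sumset_3I; simp; linarith)
  moreover have "distinct xs"
    unfolding xs_def using assms s by simp
  moreover have "{x - a - b, x + a - b, x - a + b, x + s - a, x + s - b} \<subseteq> restricted_sumset 3 ?A"
    using assms s
    by (simp only: insert_subset empty_subsetI diff_conv_add_uminus)
      (intro conjI restricted_sumset_3I; simp; linarith)
  moreover have "\<not> {x - a - b, x + a - b, x - a + b, x + s - a, x + s - b} \<subseteq> set xs"
    unfolding xs_def using assms s by (simp; smt)
  ultimately have "Suc (length xs) \<le> card (restricted_sumset 3 ?A)"
    using Suc_length_le_card finite_restricted_sumset[of ?A 3] by blast
  then show ?thesis
    unfolding xs_def by simp
qed

lemma card_restricted_sumset_3_three_pairs: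
  fixes a b c x :: int
  assumes "0 < a" "a < b" "b < c" "c < x"
  shows "11 \<le> card (restricted_sumset 3 {x, a, - a, b, - b, c, - c})"
proof -
  let ?A = "{x, a, - a, b, - b, c, - c}"
  define xs where "xs = [- a - b - c, a - b - c, - a + b - c, - a - b + c, a - b + c, - a + b + c,
    a + b + c, x + a + b, x + a + c, x + b + c]"
  have "set xs \<subseteq> restricted_sumset 3 ?A"
    unfolding xs_def using assms
    by (simp only: set_simps insert_subset empty_subsetI diff_conv_add_uminus)
      (intro conjI restricted_sumset_3I; simp)
  moreover have "distinct xs"
    unfolding xs_def using assms by simp
  moreover have "{a + b - c, x + c - a, x + c - b, x + b - a} \<subseteq> restricted_sumset 3 ?A"
    using assms
    by (simp only: insert_subset empty_subsetI diff_conv_add_uminus)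
      (intro conjI restricted_sumset_3I; simp)
  moreover have "\<not> {a + b - c, x + c - a, x + c - b, x + b - a} \<subseteq> set xs"
    unfolding xs_def using assms by (simp; smt)
  ultimately have "Suc (length xs) \<le> card (restricted_sumset 3 ?A)"
    using Suc_length_le_card finite_restricted_sumset[of ?A 3] by blast
  then show ?thesis
    unfolding xs_def by simp
qed

lemma sumset_bound_3_insert_above:
  assumes "finite A" "card (abs ` A) = 3" "\<forall>a\<in>A. \<bar>a\<bar> < x"
  shows "sumset_bound 3 (Suc (card A)) < int (card (restricted_sumset 3 (insert x A)))"
proof -
  have card_A: "card A = 3 + card (paired_values A)"
    using card_eq_card_abs_image_add_card_paired_values[OF assms(1)] assms(2) by simp
  have paired: "0 < v" "v \<in> A" "- v \<in> A" if "v \<in> paired_values A" for v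
    using that unfolding paired_values_def by auto
  have "card (paired_values A) \<le> 3"
    using card_mono[OF _ paired_values_subset_abs_image] assms(1,2) by (metis finite_imageI)
  then consider "card A \<le> 4" | "card (paired_values A) = 2" | "card (paired_values A) = 3"
    using card_A by linarith
  then have "3 * int (card A) - 7 \<le> int (card (restricted_sumset 3 (insert x A)))"
  proof cases
    case 1
    have "A \<noteq> {}"
      using assms(2) by auto
    then have "0 < x"
      using assms(3) by fastforce
    then have "card (restricted_sumset 3 A) + 3 \<le> card (restricted_sumset 3 (insert x A))"
      using assms by (intro card_restricted_sumset_insert_max) fastforce+
    moreover have "card A = 4 \<Longrightarrow> 2 \<le> card (restricted_sumset 3 A)"
      using card_restricted_sumset_ge_two[OF assms(1,2)] by simp
    ultimately show ?thesis
      using 1 card_A by linarith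
  next
    case 2
    then obtain a b where ab: "a < b" "paired_values A = {a, b}"
      by (rule card_2_sorted)
    then have ab_A: "{a, - a, b, - b} \<subseteq> A" "0 < a"
      using paired by auto
    then have "card (A - {a, - a, b, - b}) = 1"
      using 2 card_A ab(1) assms(1) by (simp add: card_Diff_subset)
    then obtain s where "A - {a, - a, b, - b} = {s}"
      by (auto simp: card_1_singleton_iff)
    then have s: "A = insert s {a, - a, b, - b}" "s \<notin> {a, - a, b, - b}"
      using ab_A(1) by auto
    then have "\<bar>s\<bar> \<noteq> a" "\<bar>s\<bar> \<noteq> b"
      by (auto simp: abs_if split: if_splits)
    moreover have "insert x A = {x, a, - a, b, - b, s}"
      using s(1) by auto
    ultimately show ?thesis
      using card_restricted_sumset_3_two_pairs[OF ab_A(2) ab(1)] assms(3) s(1) 2 card_A by auto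
  next
    case 3
    then obtain a b c where abc: "a < b" "b < c" "paired_values A = {a, b, c}"
      by (rule card_3_sorted)
    have "paired_values A = abs ` A"
      using paired_values_eq_abs_image[OF assms(1)] 3 card_A assms(2) by simp
    have "A = {a, - a, b, - b, c, - c}"
    proof
      show "{a, - a, b, - b, c, - c} \<subseteq> A"
        using abc(3) paired by auto
      show "A \<subseteq> {a, - a, b, - b, c, - c}"
      proof
        fix y assume "y \<in> A"
        then have "\<bar>y\<bar> \<in> {a, b, c}"
          using \<open>paired_values A = abs ` A\<close> abc(3) by blast
        then show "y \<in> {a, - a, b, - b, c, - c}"
          by (cases "0 \<le> y") auto
      qed
    qed
    then have "insert x A = {x, a, - a, b, - b, c, - c}" "0 < a" "c < x"
      using abc(3) paired assms(3) by auto
    then show ?thesis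
      using card_restricted_sumset_3_three_pairs[of a b c x] abc 3 card_A by simp
  qed
  then show ?thesis
    by (simp add: sumset_bound_3_Suc)
qed

lemma sumset_bound_Suc_insert_above:
  assumes "finite A" "card (abs ` A) = Suc m" "\<forall>a\<in>A. \<bar>a\<bar> < x"
    and "sumset_bound m (card A) < int (card (restricted_sumset m A))"
  shows "sumset_bound (Suc m) (Suc (card A)) < int (card (restricted_sumset (Suc m) (insert x A)))"
proof -
  have "card A \<le> 2 * Suc m"
    using card_le_double_card_abs_image[OF assms(1)] assms(2) by simp
  then consider "card A = 2 * Suc m" | "card A \<le> 2 * m + 1"
    by (cases "card A = 2 * Suc m") auto
  then show ?thesis
  proof cases
    case 1
    then show ?thesis
      using card_restricted_sumset_insert_above_symmetric[OF assms(1-3) 1] assms(4)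
      by (simp add: sumset_bound_Suc_Suc)
  next
    case 2
    then show ?thesis
      using card_restricted_sumset_insert_above_Suc[OF assms(1-3)] assms(4)
      by (simp add: sumset_bound_Suc_Suc)
  qed
qed

lemma sumset_bound_insert_max:
  assumes insert_above: "\<And>A x. finite A \<Longrightarrow> card (abs ` A) = n \<Longrightarrow> \<forall>a\<in>A. \<bar>a\<bar> < x \<Longrightarrow>
      sumset_bound n (Suc (card A)) < int (card (restricted_sumset n (insert x A)))"
    and IH: "n < card (abs ` A) \<Longrightarrow> sumset_bound n (card A) < int (card (restricted_sumset n A))"
    and A: "finite A" "x \<notin> A" "0 \<le> x" "\<forall>a\<in>A. \<bar>a\<bar> \<le> x"
    and n: "n < card (abs ` insert x A)"
  shows "sumset_bound n (Suc (card A)) < int (card (restricted_sumset n (insert x A)))"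
proof -
  have card_abs: "card (abs ` insert x A) =
      (if x \<in> abs ` A then card (abs ` A) else Suc (card (abs ` A)))"
    using A(1,3) by (simp add: card_insert_if)
  consider "n < card (abs ` A)" | "card (abs ` A) = n" "\<forall>a\<in>A. \<bar>a\<bar> < x"
  proof (cases "x \<in> abs ` A")
    case True
    then show ?thesis
      using that card_abs n by simp
  next
    case False
    then have "\<forall>a\<in>A. \<bar>a\<bar> < x"
      using A(4) by (metis image_eqI order_le_neq_trans)
    then show ?thesis
      using that card_abs n False by (cases "card (abs ` A) = n") auto
  qed
  then show ?thesis
  proof cases
    case 1
    then obtain a where "a \<in> A"
      by (metis card.empty equals0I image_empty not_less_zero)
    then have "\<bar>a\<bar> \<le> x" "a \<noteq> x"
      using A(2,4) by auto
    then have "0 < x"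
      by linarith
    moreover have "\<forall>a\<in>A. a \<noteq> - x \<longrightarrow> \<bar>a\<bar> < x"
      using A(2,4) by (metis abs_eq_iff abs_of_nonneg order_le_neq_trans A(3))
    ultimately have "card (restricted_sumset n A) + n \<le> card (restricted_sumset n (insert x A))"
      using card_restricted_sumset_insert_max[of A x n] A(1,2) 1 by auto
    then show ?thesis
      using IH[OF 1] by (simp add: sumset_bound_Suc)
  next
    case 2
    then show ?thesis
      using insert_above A(1) by blast
  qed
qed

lemma sumset_bound_less_card_of_insert_above:
  assumes insert_above: "\<And>A x. finite A \<Longrightarrow> card (abs ` A) = n \<Longrightarrow> \<forall>a\<in>A. \<bar>a\<bar> < x \<Longrightarrow>
      sumset_bound n (Suc (card A)) < int (card (restricted_sumset n (insert x A)))"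
  shows "finite A \<Longrightarrow> n < card (abs ` A) \<Longrightarrow>
    sumset_bound n (card A) < int (card (restricted_sumset n A))"
proof (induction "card A" arbitrary: A rule: less_induct)
  case less
  define x where "x = Max (abs ` A)"
  have "abs ` A \<noteq> {}"
    using less.prems(2) by auto
  then have x: "x \<in> abs ` A" "\<forall>v\<in>abs ` A. v \<le> x"
    using less.prems(1) unfolding x_def by auto
  have max_in: "sumset_bound n (card B) < int (card (restricted_sumset n B))"
    if B: "finite B" "card B = card A" "abs ` B = abs ` A" "x \<in> B" for B
  proof -
    have B_eq: "B = insert x (B - {x})" "card B = Suc (card (B - {x}))"
      using B(1,4) card_Suc_Diff1 by fastforce+
    then have "card (B - {x}) < card A"
      using B(2) by linarith
    then have IH: "n < card (abs ` (B - {x})) \<Longrightarrow>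
        sumset_bound n (card (B - {x})) < int (card (restricted_sumset n (B - {x})))"
      using less.hyps B(1) by blast
    have "\<forall>b\<in>B - {x}. \<bar>b\<bar> \<le> x"
      using x(2) B(3) by (metis DiffD1 imageI)
    moreover have "0 \<le> x"
      using x(1) by auto
    moreover have "n < card (abs ` insert x (B - {x}))"
      using B(3) less.prems(2) B_eq(1) by metis
    ultimately have "sumset_bound n (Suc (card (B - {x}))) <
        int (card (restricted_sumset n (insert x (B - {x}))))"
      using sumset_bound_insert_max[OF insert_above IH] B(1) by blast
    then show ?thesis
      using B_eq by metis
  qed
  show ?case
  proof (cases "x \<in> A")
    case True
    then show ?thesis
      using max_in less.prems(1) by blast
  next
    case False
    then have "x \<in> uminus ` A"
      using x(1) by (force simp: abs_if split: if_splits)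
    moreover have "abs ` uminus ` A = abs ` A" "card (uminus ` A) = card A"
      by (auto simp: image_image card_image)
    ultimately show ?thesis
      using max_in[of "uminus ` A"] less.prems(1) card_restricted_sumset_uminus by simp
  qed
qed

lemma sumset_bound_less_card_restricted_sumset:
  assumes "3 \<le> n" "finite A" "n < card (abs ` A)"
  shows "sumset_bound n (card A) < int (card (restricted_sumset n A))"
  using assms
proof (induction n arbitrary: A rule: nat_induct_at_least)
  case base
  then show ?case
    using sumset_bound_less_card_of_insert_above sumset_bound_3_insert_above by blast
next
  case (Suc m)
  then show ?case
    using sumset_bound_less_card_of_insert_above[of "Suc m"] sumset_bound_Suc_insert_above
    by (metis lessI)
qed

theorem theorem1p5:
  fixes n k :: nat and A :: "int set"
  assumes "n > 2" and "finite A" and "card A = k" and "k \<ge> 2 * n + 1"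
  shows "int (card (restricted_sumset n A)) >
           (int k - 1) * int n - 3 * int (n choose 2) + 1"
proof -
  have "n < card (abs ` A)"
    using card_le_double_card_abs_image[OF assms(2)] assms(3,4) by linarith
  then show ?thesis
    using sumset_bound_less_card_restricted_sumset[of n A] assms(1-3)
    unfolding sumset_bound_def by simp
qed

end
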